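(* Let $X$ be a set and $\{d_r\colon X\times X\to\mathbb{R}_{\ge0}\cup\{\infty\}\}_{r>0}$ a family satisfying the weaker $\{d_r\}$-axioms (see context). Then there exists a quasi-pseudo-metric $d$ on $X$ such that the quasi-uniformity induced by $d$ equals the quasi-uniformity $\mathcal U$ induced by $\{d_r\}_{r>0}$. Moreover, if $\{d_r\}_{r>0}$ is non-degenerate, i.e. $d_r(x,y)=0$ for all $r>0$ implies $x=y$, then $d$ can be chosen to be a quasi-metric.
   Context: The weaker $\{d_r\}$-axioms, required for all $x,y,z\in X$: (Self-distance) $d_r(x,x)=0$ for all $r>0$. (Upper semi-continuity) if $r_1\le r_2$ then $d_{r_1}(x,y)\le d_{r_2}(x,y)$; and if $d_r(x,y)<\varepsilon$ there is $\delta>0$ with $d_{r+\delta}(x,y)<\varepsilon$. (Weaker triangle inequality) for $r_1,r_2,r_3>0$, if $d_{r_1+r_2+r_3}(x,y)<r_3$ and $d_{r_1+r_2+r_3}(y,z)<r_2$, then $d_{r_1}(x,z)\le d_{r_1+r_2+r_3}(x,y)+d_{r_1+r_2+r_3}(y,z)$. The quasi-uniformity $\mathcal U$ induced by $\{d_r\}$ consists of all $U\subset X\times X$ containing $\{(x,y)\mid d_r(x,y)<\varepsilon\}$ for some $r,\varepsilon>0$. A quasi-pseudo-metric is a function $d\colon X\times X\to\mathbb{R}_{\ge0}$ with $d(x,x)=0$ and $d(x,z)\le d(x,y)+d(y,z)$ for all $x,y,z$ (not necessarily symmetric); it is a quasi-metric if moreover $d(x,y)=0$ implies $x=y$. The quasi-uniformity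 induced by $d$ consists of all $U\subset X\times X$ containing $\{(x,y)\mid d(x,y)<\varepsilon\}$ for some $\varepsilon>0$. *)

theory Defs
  imports "HOL-Analysis.Analysis"
begin

definition weaker_dr_axioms :: "'a set \<Rightarrow> (real \<Rightarrow> 'a \<Rightarrow> 'a \<Rightarrow> ennreal) \<Rightarrow> bool" where
  "weaker_dr_axioms X D \<longleftrightarrow>
     (\<forall>x\<in>X. \<forall>r>0. D r x x = 0) \<and>
     (\<forall>x\<in>X. \<forall>y\<in>X. \<forall>r1 r2. 0 < r1 \<and> r1 \<le> r2 \<longrightarrow> D r1 x y \<le> D r2 x y) \<and>
     (\<forall>x\<in>X. \<forall>y\<in>X. \<forall>r>0. \<forall>\<epsilon>::real. D r x y < ennreal \<epsilon> \<longrightarrow>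
         (\<exists>\<delta>>0. D (r + \<delta>) x y < ennreal \<epsilon>)) \<and>
     (\<forall>x\<in>X. \<forall>y\<in>X. \<forall>z\<in>X. \<forall>r1>0. \<forall>r2>0. \<forall>r3>0.
         D (r1 + r2 + r3) x y < ennreal r3 \<and> D (r1 + r2 + r3) y z < ennreal r2 \<longrightarrow>
         D r1 x z \<le> D (r1 + r2 + r3) x y + D (r1 + r2 + r3) y z)"

definition dr_nondegenerate :: "'a set \<Rightarrow> (real \<Rightarrow> 'a \<Rightarrow> 'a \<Rightarrow> ennreal) \<Rightarrow> bool" where
  "dr_nondegenerate X D \<longleftrightarrow> (\<forall>x\<in>X. \<forall>y\<in>X. (\<forall>r>0. D r x y = 0) \<longrightarrow> x = y)"

definition quasi_uniformity_dr :: "'a set \<Rightarrow> (real \<Rightarrow> 'a \<Rightarrow> 'a \<Rightarrow> ennreal) \<Rightarrow> ('a \<times> 'a) set set" where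
  "quasi_uniformity_dr X D = {U. U \<subseteq> X \<times> X \<and>
     (\<exists>r>0. \<exists>\<epsilon>>0. {(x, y) \<in> X \<times> X. D r x y < ennreal \<epsilon>} \<subseteq> U)}"

definition quasi_pseudo_metric :: "'a set \<Rightarrow> ('a \<Rightarrow> 'a \<Rightarrow> real) \<Rightarrow> bool" where
  "quasi_pseudo_metric X d \<longleftrightarrow>
     (\<forall>x\<in>X. \<forall>y\<in>X. 0 \<le> d x y) \<and> (\<forall>x\<in>X. d x x = 0) \<and>
     (\<forall>x\<in>X. \<forall>y\<in>X. \<forall>z\<in>X. d x z \<le> d x y + d y z)"

definition quasi_metric :: "'a set \<Rightarrow> ('a \<Rightarrow> 'a \<Rightarrow> real) \<Rightarrow> bool" where
  "quasi_metric X d \<longleftrightarrow> quasi_pseudo_metric X d \<and> (\<forall>x\<in>X. \<forall>y\<in>X. d x y = 0 \<longrightarrow> x = y)"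

definition quasi_uniformity_d :: "'a set \<Rightarrow> ('a \<Rightarrow> 'a \<Rightarrow> real) \<Rightarrow> ('a \<times> 'a) set set" where
  "quasi_uniformity_d X d = {U. U \<subseteq> X \<times> X \<and>
     (\<exists>\<epsilon>>0. {(x, y) \<in> X \<times> X. d x y < \<epsilon>} \<subseteq> U)}"

end

theory Submission
  imports Defs
begin

text \<open>
  The sets \<open>V n = {(x, y). D\<^sub>n(x, y) < 3^-n}\<close> (with \<open>V 0 = X \<times> X\<close>) form a base of the
  quasi-uniformity, and two applications of the weaker triangle inequality give
  \<open>V (n+1) O V (n+1) O V (n+1) \<subseteq> V n\<close>.  For any such sequence the metrization lemma of
  Frink and Kelley works without symmetry: with \<open>f(x, y) = inf {2^-n | (x, y) \<in> V n}\<close> and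
  \<open>d\<close> the infimum of the \<open>f\<close>-lengths of finite chains from \<open>x\<close> to \<open>y\<close>, splitting a chain
  at the point where half of its length is used up shows by induction that \<open>f \<le> 2 d \<le> 2 f\<close>.
  Hence \<open>d\<close> is a quasi-pseudo-metric whose balls and the sets \<open>V n\<close> are mutually cofinal,
  and \<open>d(x, y) = 0\<close> forces \<open>(x, y)\<close> into every \<open>V n\<close>.
\<close>

lemma le_twice_if_below_halving_powers:
  fixes F a :: real
  assumes "F \<le> 1" "0 \<le> a" and below: "\<And>k. a < (1/2)^k \<Longrightarrow> F \<le> (1/2)^k"
  shows "F \<le> 2 * a"
proof (rule ccontr)
  assume "\<not> F \<le> 2 * a"
  then have "0 < F" using assms(2) by simp
  then have ex: "\<exists>k. (1/2::real)^k < F" using real_arch_pow_inv[of F "1/2"] by auto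
  define k where "k = (LEAST k. (1/2::real)^k < F)"
  have k: "(1/2::real)^k < F" unfolding k_def using LeastI_ex[OF ex] .
  then have "k \<noteq> 0" using assms(1) by (intro notI) simp
  then obtain j where j: "k = Suc j" using not0_implies_Suc by blast
  have "\<not> (1/2::real)^j < F"
    using not_less_Least[of j "\<lambda>k. (1/2::real)^k < F"] j unfolding k_def by simp
  then have "a < (1/2)^k" using \<open>\<not> F \<le> 2 * a\<close> j by simp
  with below k show False by fastforce
qed

lemma sum_split_at_half:
  fixes c :: "nat \<Rightarrow> real"
  assumes nonneg: "\<And>k. k \<in> {i..<j} \<Longrightarrow> 0 \<le> c k" and "i < j"
  obtains l where "i \<le> l" "l < j" "sum c {i..<l} \<le> sum c {i..<j} / 2"
    "sum c {Suc l..<j} \<le> sum c {i..<j} / 2"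
proof -
  define S where "S = sum c {i..<j}"
  define L where "L = {l. i \<le> l \<and> l < j \<and> sum c {i..<l} \<le> S / 2}"
  have "0 \<le> S" unfolding S_def using nonneg by (rule sum_nonneg)
  then have "i \<in> L" using \<open>i < j\<close> by (simp add: L_def)
  have "finite L" by (rule finite_subset[of _ "{i..<j}"]) (auto simp: L_def)
  define l where "l = Max L"
  have l_max: "\<And>m. m \<in> L \<Longrightarrow> m \<le> l" unfolding l_def using \<open>finite L\<close> by simp
  have "l \<in> L" unfolding l_def using \<open>finite L\<close> \<open>i \<in> L\<close> by (intro Max_in) auto
  then have l: "i \<le> l" "l < j" "sum c {i..<l} \<le> S / 2" by (auto simp: L_def)
  have "sum c {Suc l..<j} \<le> S / 2"
  proof (cases "Suc l = j")
    case True
    then show ?thesis using \<open>0 \<le> S\<close> by simp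
  next
    case False
    then have "Suc l \<notin> L" using l_max by fastforce
    then have "S / 2 < sum c {i..<Suc l}" using l False by (auto simp: L_def)
    moreover have "S = sum c {i..<Suc l} + sum c {Suc l..<j}"
      unfolding S_def using l sum.atLeastLessThan_concat[of i "Suc l" j c] by simp
    ultimately show ?thesis by simp
  qed
  with l that show thesis by (simp add: S_def)
qed

definition quasi_uniformity_generated :: "'a set \<Rightarrow> (nat \<Rightarrow> ('a \<times> 'a) set) \<Rightarrow> ('a \<times> 'a) set set"
  where "quasi_uniformity_generated X V = {U. U \<subseteq> X \<times> X \<and> (\<exists>n. V n \<subseteq> U)}"

locale entourage_sequence =
  fixes X :: "'a set" and V :: "nat \<Rightarrow> ('a \<times> 'a) set"
  assumes V_zero: "V 0 = X \<times> X"
    and V_subset: "V n \<subseteq> X \<times> X"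
    and V_refl: "x \<in> X \<Longrightarrow> (x, x) \<in> V n"
    and V_cube: "(x, y) \<in> V (Suc n) \<Longrightarrow> (y, z) \<in> V (Suc n) \<Longrightarrow> (z, w) \<in> V (Suc n) \<Longrightarrow>
      (x, w) \<in> V n"
begin

lemma V_Suc_subset: "V (Suc n) \<subseteq> V n"
  using V_cube V_refl V_subset by blast

lemma V_antimono: "m \<le> n \<Longrightarrow> V n \<subseteq> V m"
  using decseq_SucI[of V, OF V_Suc_subset] by (rule decseqD)

definition level :: "'a \<Rightarrow> 'a \<Rightarrow> real"
  where "level x y = Inf {(1/2)^n | n. (x, y) \<in> V n}"

lemma level_le: assumes "(x, y) \<in> V n" shows "level x y \<le> (1/2)^n"
  unfolding level_def using assms by (intro cInf_lower bdd_belowI[of _ 0]) auto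

lemma levels_nonempty: "x \<in> X \<Longrightarrow> y \<in> X \<Longrightarrow> {(1/2::real)^n | n. (x, y) \<in> V n} \<noteq> {}"
  using V_zero by blast

lemma level_nonneg: "x \<in> X \<Longrightarrow> y \<in> X \<Longrightarrow> 0 \<le> level x y"
  unfolding level_def by (rule cInf_greatest[OF levels_nonempty]) auto

lemma level_le_one: "x \<in> X \<Longrightarrow> y \<in> X \<Longrightarrow> level x y \<le> 1"
  using level_le[of x y 0] V_zero by simp

lemma mem_V_if_level_less:
  assumes "x \<in> X" "y \<in> X" "level x y < (1/2)^k"
  shows "(x, y) \<in> V (Suc k)"
proof -
  obtain n where n: "(x, y) \<in> V n" "(1/2::real)^n < (1/2)^k"
    using cInf_lessD[OF levels_nonempty[OF assms(1,2)]] assms(3) unfolding level_def by blast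
  then have "Suc k \<le> n" by (simp add: power_strict_decreasing_iff)
  with n(1) V_antimono show ?thesis by blast
qed

lemma level_refl: "x \<in> X \<Longrightarrow> level x x = 0"
  using le_twice_if_below_halving_powers[of "level x x" 0] level_le_one level_le[OF V_refl]
    level_nonneg by force

lemma level_cube:
  assumes "u \<in> X" "v \<in> X" "w \<in> X" "z \<in> X"
    and "level u v \<le> a" "level v w \<le> a" "level w z \<le> a"
  shows "level u z \<le> 2 * a"
proof (rule le_twice_if_below_halving_powers)
  show "level u z \<le> 1" "0 \<le> a" using assms level_le_one level_nonneg[of u v] by auto
  fix k assume "a < (1/2)^k"
  then have "(u, z) \<in> V k" using assms mem_V_if_level_less V_cube by (meson le_less_trans)
  then show "level u z \<le> (1/2)^k" by (rule level_le)
qed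

lemma level_le_twice_path_sum:
  assumes "i \<le> j" "\<And>k. i \<le> k \<Longrightarrow> k \<le> j \<Longrightarrow> p k \<in> X"
  shows "level (p i) (p j) \<le> 2 * (\<Sum>k = i..<j. level (p k) (p (Suc k)))"
  using assms
proof (induction "j - i" arbitrary: i j rule: less_induct)
  case less
  let ?c = "\<lambda>k. level (p k) (p (Suc k))"
  show ?case
  proof (cases "i = j")
    case True
    then show ?thesis using less.prems level_refl by simp
  next
    case False
    then have "i < j" using less.prems(1) by simp
    have nonneg: "0 \<le> ?c k" if "k \<in> {i..<j}" for k
      using that less.prems(2) level_nonneg by simp
    obtain l where l: "i \<le> l" "l < j" "sum ?c {i..<l} \<le> sum ?c {i..<j} / 2"
      "sum ?c {Suc l..<j} \<le> sum ?c {i..<j} / 2"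
      using sum_split_at_half[where c = ?c, OF nonneg \<open>i < j\<close>] by blast
    have "sum ?c {i..<j} = sum ?c {i..<l} + ?c l + sum ?c {Suc l..<j}"
      using l sum.atLeastLessThan_concat[of i l j ?c] sum.atLeast_Suc_lessThan[of l j ?c] by simp
    moreover have "0 \<le> sum ?c {i..<l}" "0 \<le> sum ?c {Suc l..<j}"
      using nonneg l by (auto intro!: sum_nonneg)
    ultimately have middle: "?c l \<le> sum ?c {i..<j}" by linarith
    have "level (p i) (p l) \<le> 2 * sum ?c {i..<l}"
      using less.hyps[of l i] l less.prems by auto
    moreover have "level (p (Suc l)) (p j) \<le> 2 * sum ?c {Suc l..<j}"
      using less.hyps[of j "Suc l"] l less.prems by auto
    ultimately have "level (p i) (p j) \<le> 2 * sum ?c {i..<j}"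
      using l middle less.prems
      by (intro level_cube[of "p i" "p l" "p (Suc l)" "p j"]) auto
    then show ?thesis by simp
  qed
qed

definition chain_sums :: "'a \<Rightarrow> 'a \<Rightarrow> real set"
  where "chain_sums x y = {\<Sum>k<n. level (p k) (p (Suc k)) | p n.
           p 0 = x \<and> p n = y \<and> (\<forall>k\<le>n. p k \<in> X)}"

definition chain_dist :: "'a \<Rightarrow> 'a \<Rightarrow> real"
  where "chain_dist x y = Inf (chain_sums x y)"

lemma level_mem_chain_sums:
  assumes "x \<in> X" "y \<in> X"
  shows "level x y \<in> chain_sums x y"
proof -
  define p where "p = (\<lambda>k::nat. if k = 0 then x else y)"
  have "level x y = (\<Sum>k<1. level (p k) (p (Suc k)))" "p 0 = x" "p 1 = y" "\<forall>k\<le>1. p k \<in> X"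
    using assms by (auto simp: p_def)
  then show ?thesis unfolding chain_sums_def by blast
qed

lemma chain_sums_add:
  assumes "a \<in> chain_sums x y" "b \<in> chain_sums y z"
  shows "a + b \<in> chain_sums x z"
proof -
  obtain p n where p: "a = (\<Sum>k<n. level (p k) (p (Suc k)))" "p 0 = x" "p n = y" "\<forall>k\<le>n. p k \<in> X"
    using assms(1) unfolding chain_sums_def by blast
  obtain q m where q: "b = (\<Sum>k<m. level (q k) (q (Suc k)))" "q 0 = y" "q m = z" "\<forall>k\<le>m. q k \<in> X"
    using assms(2) unfolding chain_sums_def by blast
  define r where "r = (\<lambda>k. if k \<le> n then p k else q (k - n))"
  have "(\<Sum>k<n + m. level (r k) (r (Suc k)))
      = (\<Sum>k<n. level (r k) (r (Suc k))) + (\<Sum>k<m. level (r (n + k)) (r (Suc (n + k))))"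
    by (induction m) simp_all
  also have "\<dots> = a + b"
    using p(3) q(2) by (auto simp: p(1) q(1) r_def intro!: sum.cong)
  finally have "a + b = (\<Sum>k<n + m. level (r k) (r (Suc k)))" ..
  moreover have "r 0 = x" "r (n + m) = z" "\<forall>k\<le>n + m. r k \<in> X"
    using p q by (auto simp: r_def)
  ultimately show ?thesis unfolding chain_sums_def by blast
qed

lemma level_le_twice_chain_sum: "c \<in> chain_sums x y \<Longrightarrow> level x y \<le> 2 * c"
  unfolding chain_sums_def using level_le_twice_path_sum[of 0 _ _] by (auto simp: atLeast0LessThan)

lemma chain_sums_nonneg: "c \<in> chain_sums x y \<Longrightarrow> 0 \<le> c"
  unfolding chain_sums_def by (auto intro!: sum_nonneg level_nonneg)

lemma chain_sums_bdd_below: "bdd_below (chain_sums x y)"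
  using chain_sums_nonneg by (rule bdd_belowI)

lemma chain_dist_le_level: "x \<in> X \<Longrightarrow> y \<in> X \<Longrightarrow> chain_dist x y \<le> level x y"
  unfolding chain_dist_def by (rule cInf_lower[OF level_mem_chain_sums chain_sums_bdd_below])

lemma level_le_twice_chain_dist:
  assumes "x \<in> X" "y \<in> X"
  shows "level x y \<le> 2 * chain_dist x y"
proof -
  have "level x y / 2 \<le> Inf (chain_sums x y)"
    using level_mem_chain_sums[OF assms] level_le_twice_chain_sum
    by (intro cInf_greatest) fastforce+
  then show ?thesis unfolding chain_dist_def by simp
qed

lemma chain_dist_triangle:
  assumes "x \<in> X" "y \<in> X" "z \<in> X"
  shows "chain_dist x z \<le> chain_dist x y + chain_dist y z"
proof (rule field_le_epsilon)
  fix e :: real assume "0 < e"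
  obtain a where a: "a \<in> chain_sums x y" "a < chain_dist x y + e / 2"
    using cInf_lessD[OF _, of "chain_sums x y" "chain_dist x y + e / 2"]
      level_mem_chain_sums[OF assms(1,2)] \<open>0 < e\<close> unfolding chain_dist_def by force
  obtain b where b: "b \<in> chain_sums y z" "b < chain_dist y z + e / 2"
    using cInf_lessD[OF _, of "chain_sums y z" "chain_dist y z + e / 2"]
      level_mem_chain_sums[OF assms(2,3)] \<open>0 < e\<close> unfolding chain_dist_def by force
  have "chain_dist x z \<le> a + b"
    unfolding chain_dist_def
    by (rule cInf_lower[OF chain_sums_add[OF a(1) b(1)] chain_sums_bdd_below])
  with a b show "chain_dist x z \<le> chain_dist x y + chain_dist y z + e" by simp
qed

lemma chain_dist_nonneg: "x \<in> X \<Longrightarrow> y \<in> X \<Longrightarrow> 0 \<le> chain_dist x y"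
  using level_le_twice_chain_dist level_nonneg by (smt (verit))

lemma chain_dist_refl: "x \<in> X \<Longrightarrow> chain_dist x x = 0"
  using chain_dist_le_level[of x x] chain_dist_nonneg[of x x] level_refl by simp

lemma chain_dist_quasi_pseudo_metric: "quasi_pseudo_metric X chain_dist"
  unfolding quasi_pseudo_metric_def
  by (simp add: chain_dist_nonneg chain_dist_refl chain_dist_triangle)

lemma chain_dist_le_if_mem: "(x, y) \<in> V n \<Longrightarrow> chain_dist x y \<le> (1/2)^n"
  using V_subset chain_dist_le_level level_le by (meson mem_Sigma_iff order_trans subsetD)

lemma mem_if_chain_dist_less:
  assumes "x \<in> X" "y \<in> X" "chain_dist x y < (1/2)^n"
  shows "(x, y) \<in> V n"
proof (cases n)
  case 0
  then show ?thesis using assms V_zero by simp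
next
  case (Suc m)
  then have "level x y < (1/2)^m"
    using level_le_twice_chain_dist[OF assms(1,2)] assms(3) by simp
  then show ?thesis using mem_V_if_level_less assms Suc by blast
qed

lemma quasi_uniformity_chain_dist: "quasi_uniformity_d X chain_dist = quasi_uniformity_generated X V"
proof (intro set_eqI iffI)
  fix U assume "U \<in> quasi_uniformity_d X chain_dist"
  then obtain e where U: "U \<subseteq> X \<times> X" "0 < e" "{(x, y) \<in> X \<times> X. chain_dist x y < e} \<subseteq> U"
    unfolding quasi_uniformity_d_def by blast
  obtain n where "(1/2::real)^n < e" using real_arch_pow_inv[OF U(2), of "1/2"] by auto
  then have "V n \<subseteq> U" using U(3) V_subset chain_dist_le_if_mem by fastforce
  with U(1) show "U \<in> quasi_uniformity_generated X V"
    unfolding quasi_uniformity_generated_def by blast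
next
  fix U assume "U \<in> quasi_uniformity_generated X V"
  then obtain n where "U \<subseteq> X \<times> X" "V n \<subseteq> U"
    unfolding quasi_uniformity_generated_def by blast
  moreover have "{(x, y) \<in> X \<times> X. chain_dist x y < (1/2)^n} \<subseteq> V n"
    using mem_if_chain_dist_less by blast
  ultimately show "U \<in> quasi_uniformity_d X chain_dist"
    unfolding quasi_uniformity_d_def by (intro CollectI conjI exI[of _ "(1/2)^n"]) auto
qed

lemma chain_dist_quasi_metric:
  assumes "\<And>x y. x \<in> X \<Longrightarrow> y \<in> X \<Longrightarrow> (\<forall>n. (x, y) \<in> V n) \<Longrightarrow> x = y"
  shows "quasi_metric X chain_dist"
  unfolding quasi_metric_def
  using chain_dist_quasi_pseudo_metric assms mem_if_chain_dist_less by simp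

end

text \<open>The tolerance \<open>3^-n\<close> lets three steps in \<open>V (n+1)\<close> compose into one step in \<open>V n\<close>,
  while the radius lost in the two weaker triangle inequalities, \<open>5 \<cdot> 3^-(n+1)\<close>, stays below 1.\<close>

definition dr_entourage :: "'a set \<Rightarrow> (real \<Rightarrow> 'a \<Rightarrow> 'a \<Rightarrow> ennreal) \<Rightarrow> nat \<Rightarrow> ('a \<times> 'a) set"
  where "dr_entourage X D n = {(x, y) \<in> X \<times> X. n = 0 \<or> D (real n) x y < ennreal ((1/3)^n)}"

context
  fixes X :: "'a set" and D :: "real \<Rightarrow> 'a \<Rightarrow> 'a \<Rightarrow> ennreal"
  assumes ax: "weaker_dr_axioms X D"
begin

lemma dr_refl: "x \<in> X \<Longrightarrow> 0 < r \<Longrightarrow> D r x x = 0"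
  using ax unfolding weaker_dr_axioms_def by blast

lemma dr_mono: "x \<in> X \<Longrightarrow> y \<in> X \<Longrightarrow> 0 < r1 \<Longrightarrow> r1 \<le> r2 \<Longrightarrow> D r1 x y \<le> D r2 x y"
  using ax unfolding weaker_dr_axioms_def by blast

lemma dr_triangle_less:
  assumes "x \<in> X" "y \<in> X" "z \<in> X" "0 < r" "0 < a" "0 < b"
    and "D (r + a + b) x y < ennreal b" "D (r + a + b) y z < ennreal a"
  shows "D r x z < ennreal (a + b)"
proof -
  have "D r x z \<le> D (r + a + b) x y + D (r + a + b) y z"
    using ax assms unfolding weaker_dr_axioms_def by blast
  also have "\<dots> < ennreal (b + a)"
    using assms(7,8) by (rule add_mono_ennreal)
  finally show ?thesis by (simp add: add.commute)
qed

lemma dr_entourage_cube: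
  assumes "(x, y) \<in> dr_entourage X D (Suc n)" "(y, z) \<in> dr_entourage X D (Suc n)"
    "(z, w) \<in> dr_entourage X D (Suc n)"
  shows "(x, w) \<in> dr_entourage X D n"
proof (cases "n = 0")
  case True
  then show ?thesis using assms by (simp add: dr_entourage_def)
next
  case False
  define e :: real where "e = (1/3)^Suc n"
  have "0 < e" by (simp add: e_def)
  have "(1/3::real)^Suc n \<le> (1/3)^2" by (rule power_decreasing) (use False in auto)
  then have "e \<le> 1/9" by (simp add: e_def power2_eq_square)
  have X: "x \<in> X" "y \<in> X" "z \<in> X" "w \<in> X" using assms by (auto simp: dr_entourage_def)
  have steps: "D (real (Suc n)) x y < ennreal e" "D (real (Suc n)) y z < ennreal e"
    "D (real (Suc n)) z w < ennreal e"
    using assms by (auto simp: dr_entourage_def e_def simp del: of_nat_Suc)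
  define s where "s = real (Suc n) - 2 * e"
  have "0 < s - 3 * e" using \<open>e \<le> 1/9\<close> by (simp add: s_def)
  have "s + e + e = real (Suc n)" by (simp add: s_def)
  then have xz: "D s x z < ennreal (e + e)"
    using dr_triangle_less[OF X(1,2,3), of s e e] steps \<open>0 < e\<close> \<open>0 < s - 3 * e\<close> by simp
  have zw: "D s z w < ennreal e"
    using dr_mono[OF X(3,4), of s "real (Suc n)"] steps(3) \<open>0 < e\<close> \<open>0 < s - 3 * e\<close>
    by (simp add: s_def)
  have "s - 3 * e + e + (e + e) = s" by simp
  then have "D (s - 3 * e) x w < ennreal (e + (e + e))"
    using dr_triangle_less[OF X(1,3,4), of "s - 3 * e" e "e + e"] xz zw \<open>0 < e\<close> \<open>0 < s - 3 * e\<close>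
    by simp
  moreover have "D (real n) x w \<le> D (s - 3 * e) x w"
    using dr_mono[OF X(1,4)] False \<open>e \<le> 1/9\<close> by (simp add: s_def)
  moreover have "e + (e + e) = (1/3)^n" by (simp add: e_def)
  ultimately show ?thesis using X by (auto simp: dr_entourage_def)
qed

lemma entourage_sequence_dr_entourage: "entourage_sequence X (dr_entourage X D)"
proof
  fix x y z w n
  assume "(x, y) \<in> dr_entourage X D (Suc n)" "(y, z) \<in> dr_entourage X D (Suc n)"
    "(z, w) \<in> dr_entourage X D (Suc n)"
  then show "(x, w) \<in> dr_entourage X D n" by (rule dr_entourage_cube)
next
  fix x n assume "x \<in> X"
  then show "(x, x) \<in> dr_entourage X D n"
    by (cases "n = 0") (simp_all add: dr_entourage_def dr_refl)
qed (auto simp: dr_entourage_def)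

lemma dr_entourage_subset_ball:
  assumes "0 < r" "0 < e"
  obtains n where "dr_entourage X D n \<subseteq> {(x, y) \<in> X \<times> X. D r x y < ennreal e}"
proof -
  obtain n1 where n1: "(1/3::real)^n1 < e" using real_arch_pow_inv[OF assms(2), of "1/3"] by auto
  obtain n2 where n2: "r \<le> real n2" using real_arch_simple by blast
  define n where "n = Suc (n1 + n2)"
  have n: "(1/3::real)^n \<le> (1/3)^n1" by (intro power_decreasing) (auto simp: n_def)
  have "x \<in> X \<and> y \<in> X \<and> D r x y < ennreal e" if "(x, y) \<in> dr_entourage X D n" for x y
  proof -
    have xy: "x \<in> X" "y \<in> X" "D (real n) x y < ennreal ((1/3)^n)"
      using that by (auto simp: dr_entourage_def n_def simp del: of_nat_Suc)
    have "D r x y \<le> D (real n) x y" using dr_mono[OF xy(1,2) assms(1)] n2 by (simp add: n_def)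
    also note xy(3)
    also have "ennreal ((1/3)^n) \<le> ennreal e"
      by (intro ennreal_leI) (use n n1 in linarith)
    finally show ?thesis using xy by simp
  qed
  then have "dr_entourage X D n \<subseteq> {(x, y) \<in> X \<times> X. D r x y < ennreal e}" by auto
  then show thesis by (rule that)
qed

lemma ball_subset_dr_entourage:
  "\<exists>r>0. \<exists>e>0. {(x, y) \<in> X \<times> X. D r x y < ennreal e} \<subseteq> dr_entourage X D n"
proof (cases "n = 0")
  case True
  then show ?thesis by (auto simp: dr_entourage_def intro!: exI[of _ "1::real"])
next
  case False
  have "{(x, y) \<in> X \<times> X. D (real n) x y < ennreal ((1/3)^n)} \<subseteq> dr_entourage X D n"
    by (auto simp: dr_entourage_def)
  moreover have "0 < real n" "0 < (1/3::real)^n" using False by auto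
  ultimately show ?thesis by blast
qed

lemma quasi_uniformity_dr_eq_generated:
  "quasi_uniformity_dr X D = quasi_uniformity_generated X (dr_entourage X D)"
proof (intro set_eqI iffI)
  fix U assume "U \<in> quasi_uniformity_dr X D"
  then obtain r e where U: "U \<subseteq> X \<times> X" "0 < r" "0 < e"
    "{(x, y) \<in> X \<times> X. D r x y < ennreal e} \<subseteq> U"
    unfolding quasi_uniformity_dr_def by blast
  obtain n where "dr_entourage X D n \<subseteq> {(x, y) \<in> X \<times> X. D r x y < ennreal e}"
    using dr_entourage_subset_ball[OF U(2,3)] .
  with U(1,4) show "U \<in> quasi_uniformity_generated X (dr_entourage X D)"
    unfolding quasi_uniformity_generated_def by blast
next
  fix U assume "U \<in> quasi_uniformity_generated X (dr_entourage X D)"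
  then obtain n where "U \<subseteq> X \<times> X" "dr_entourage X D n \<subseteq> U"
    unfolding quasi_uniformity_generated_def by blast
  with ball_subset_dr_entourage[of n] show "U \<in> quasi_uniformity_dr X D"
    unfolding quasi_uniformity_dr_def by blast
qed

lemma dr_zero_if_mem_all_entourages:
  assumes "\<forall>n. (x, y) \<in> dr_entourage X D n" "0 < r"
  shows "D r x y = 0"
proof -
  have "D r x y \<le> 0"
  proof (rule ennreal_le_epsilon)
    fix e :: real assume "0 < e"
    obtain n where "dr_entourage X D n \<subseteq> {(x, y) \<in> X \<times> X. D r x y < ennreal e}"
      using dr_entourage_subset_ball[OF assms(2) \<open>0 < e\<close>] .
    then have "D r x y < ennreal e" using assms(1) by blast
    then show "D r x y \<le> 0 + ennreal e" by simp
  qed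
  then show ?thesis by simp
qed

end

theorem theorem4p10:
  fixes X :: "'a set" and D :: "real \<Rightarrow> 'a \<Rightarrow> 'a \<Rightarrow> ennreal"
  assumes "weaker_dr_axioms X D"
  shows "(\<exists>d. quasi_pseudo_metric X d \<and> quasi_uniformity_d X d = quasi_uniformity_dr X D) \<and>
         (dr_nondegenerate X D \<longrightarrow>
            (\<exists>d. quasi_metric X d \<and> quasi_uniformity_d X d = quasi_uniformity_dr X D))"
proof -
  interpret entourage_sequence X "dr_entourage X D"
    using assms by (rule entourage_sequence_dr_entourage)
  have same_uniformity: "quasi_uniformity_d X chain_dist = quasi_uniformity_dr X D"
    using quasi_uniformity_chain_dist quasi_uniformity_dr_eq_generated[OF assms] by simp
  have "quasi_metric X chain_dist" if "dr_nondegenerate X D"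
    using that dr_zero_if_mem_all_entourages[OF assms]
    by (intro chain_dist_quasi_metric) (auto simp: dr_nondegenerate_def)
  then show ?thesis using chain_dist_quasi_pseudo_metric same_uniformity by blast
qed

end
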